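(* Fix a goal $s_g$ and a policy $\pi$, and let $f:\mathcal{S}\to\mathbb{R}$. Suppose that from every state, trajectories generated by $\pi$ reach $s_g$ in finite time with probability one, and that $f$ is $L$-bounded in expected transitions, i.e. $$\sup_{s\in\mathcal{S}}\ \mathop{\mathbb{E}}_{a\sim\pi(\cdot\mid s,s_g),\ s'\sim P(\cdot\mid s,a,s_g)}\big[\,|f(s')-f(s)|\,\big]\le L.$$ Then $f$ is $L$-Lipschitz, i.e. $|f(s_g)-f(s_0)|\le L\, d^\pi_T(s_0,s_g)$ for all $s_0\in\mathcal{S}$.
   Context: Setting: a goal-conditioned MDP with discrete state space $\mathcal{S}$, actions $\mathcal{A}$, goal-dependent transition kernel $P(\cdot\mid s,a,s_g)$ and policy $\pi(\cdot\mid s,s_g)$. $T(s_g\mid\pi,s)$ denotes the first time-step at which $s_g$ is encountered when starting at $s$ and following $\pi$, and $d^\pi_T(s,s_g):=\mathbb{E}[T(s_g\mid\pi,s)]$ is the time-step quasimetric. For a fixed goal $s_g$, $f$ is called $L$-Lipschitz if $|f(s_g)-f(s_0)|\le L\,d^\pi_T(s_0,s_g)$ for all $s_0\in\mathcal{S}$. *)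

theory Defs
  imports "HOL-Probability.Probability"
begin

definition step_kernel ::
  "('s \<Rightarrow> 'a \<Rightarrow> 's \<Rightarrow> 's pmf) \<Rightarrow> ('s \<Rightarrow> 's \<Rightarrow> 'a pmf) \<Rightarrow> 's \<Rightarrow> 's \<Rightarrow> 's pmf" where
  "step_kernel P pol sg s = bind_pmf (pol s sg) (\<lambda>a. P s a sg)"

text \<open>hit_prob P pol sg n s = Pr[T(sg | pol, s) = n]: probability that the trajectory started at s
  (time 0) first encounters sg at time step n.\<close>
fun hit_prob ::
  "('s \<Rightarrow> 'a \<Rightarrow> 's \<Rightarrow> 's pmf) \<Rightarrow> ('s \<Rightarrow> 's \<Rightarrow> 'a pmf) \<Rightarrow> 's \<Rightarrow> nat \<Rightarrow> 's \<Rightarrow> ennreal" where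
  "hit_prob P pol sg 0 s = (if s = sg then 1 else 0)"
| "hit_prob P pol sg (Suc n) s =
     (if s = sg then 0 else \<integral>\<^sup>+ s'. hit_prob P pol sg n s' \<partial>measure_pmf (step_kernel P pol sg s))"

definition reach_prob ::
  "('s \<Rightarrow> 'a \<Rightarrow> 's \<Rightarrow> 's pmf) \<Rightarrow> ('s \<Rightarrow> 's \<Rightarrow> 'a pmf) \<Rightarrow> 's \<Rightarrow> 's \<Rightarrow> ennreal" where
  "reach_prob P pol sg s = (\<Sum>n. hit_prob P pol sg n s)"

text \<open>Time-step quasimetric d_T(s, sg) = E[T(sg | pol, s)] in [0, infinity]
  (T = infinity contributes infinity if it has positive probability).\<close>
definition dT ::
  "('s \<Rightarrow> 'a \<Rightarrow> 's \<Rightarrow> 's pmf) \<Rightarrow> ('s \<Rightarrow> 's \<Rightarrow> 'a pmf) \<Rightarrow> 's \<Rightarrow> 's \<Rightarrow> ennreal" where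
  "dT P pol s sg =
     (\<Sum>n. of_nat n * hit_prob P pol sg n s)
     + (if reach_prob P pol sg s < 1 then \<infinity> else 0)"

end

theory Submission
  imports Defs
begin

text \<open>Write V N s for the expected variation \<Sum>k. |f(s(k+1)) - f(s k)| of f along the
  trajectory from s, stopped at sg or after N steps. By the triangle inequality along each path,
  |f sg - f s| Pr[T < N] \<le> V N s; by the bound on the expected increments,
  V N s \<le> L \<Sum>t<N. Pr[t < T], and this tail sum is at most E[T]. Let N tend to infinity.\<close>

fun stopped_variation ::
  "('s \<Rightarrow> 'a \<Rightarrow> 's \<Rightarrow> 's pmf) \<Rightarrow> ('s \<Rightarrow> 's \<Rightarrow> 'a pmf) \<Rightarrow> 's \<Rightarrow> ('s \<Rightarrow> real) \<Rightarrow> nat \<Rightarrow> 's \<Rightarrow> ennreal"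
where
  "stopped_variation P pol sg f 0 s = 0"
| "stopped_variation P pol sg f (Suc N) s =
     (if s = sg then 0 else
        \<integral>\<^sup>+ s'. (ennreal \<bar>f s' - f s\<bar> + stopped_variation P pol sg f N s')
          \<partial>measure_pmf (step_kernel P pol sg s))"

lemma sum_hit_prob_Suc:
  assumes "s \<noteq> sg"
  shows "(\<Sum>n<Suc N. hit_prob P pol sg n s) =
    \<integral>\<^sup>+ s'. (\<Sum>n<N. hit_prob P pol sg n s') \<partial>measure_pmf (step_kernel P pol sg s)"
  using assms by (simp add: sum.lessThan_Suc_shift nn_integral_sum del: sum.lessThan_Suc)

lemma sum_hit_prob_le_1: "(\<Sum>n<N. hit_prob P pol sg n s) \<le> 1"
proof (induction N arbitrary: s)
  case 0
  then show ?case by simp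
next
  case (Suc N)
  show ?case
  proof (cases "s = sg")
    case True
    then show ?thesis by (simp add: sum.lessThan_Suc_shift del: sum.lessThan_Suc)
  next
    case False
    have "(\<integral>\<^sup>+ s'. (\<Sum>n<N. hit_prob P pol sg n s') \<partial>measure_pmf (step_kernel P pol sg s))
        \<le> (\<integral>\<^sup>+ s'. 1 \<partial>measure_pmf (step_kernel P pol sg s))"
      by (intro nn_integral_mono Suc.IH)
    then show ?thesis
      by (subst sum_hit_prob_Suc[OF False]) simp
  qed
qed

lemma distance_times_hit_prob_le_stopped_variation:
  "ennreal \<bar>f sg - f s\<bar> * (\<Sum>n<N. hit_prob P pol sg n s) \<le> stopped_variation P pol sg f N s"
proof (induction N arbitrary: s)
  case 0
  then show ?case by simp
next
  case (Suc N)
  show ?case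
  proof (cases "s = sg")
    case True
    then show ?thesis by simp
  next
    case False
    let ?p = "\<lambda>s'. \<Sum>n<N. hit_prob P pol sg n s'"
    have pointwise: "ennreal \<bar>f sg - f s\<bar> * ?p s'
        \<le> ennreal \<bar>f s' - f s\<bar> + stopped_variation P pol sg f N s'" for s'
    proof -
      have "ennreal \<bar>f sg - f s\<bar> \<le> ennreal \<bar>f s' - f s\<bar> + ennreal \<bar>f sg - f s'\<bar>"
        unfolding ennreal_plus[OF abs_ge_zero abs_ge_zero, symmetric] by (rule ennreal_leI) linarith
      then have "ennreal \<bar>f sg - f s\<bar> * ?p s'
          \<le> ennreal \<bar>f s' - f s\<bar> * ?p s' + ennreal \<bar>f sg - f s'\<bar> * ?p s'"
        by (metis distrib_right mult_right_mono zero_le)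
      also have "\<dots> \<le> ennreal \<bar>f s' - f s\<bar> + stopped_variation P pol sg f N s'"
        using mult_left_mono[OF sum_hit_prob_le_1, of "ennreal \<bar>f s' - f s\<bar>"]
        by (intro add_mono Suc.IH) simp_all
      finally show ?thesis .
    qed
    have "ennreal \<bar>f sg - f s\<bar> * (\<Sum>n<Suc N. hit_prob P pol sg n s)
        = \<integral>\<^sup>+ s'. ennreal \<bar>f sg - f s\<bar> * ?p s' \<partial>measure_pmf (step_kernel P pol sg s)"
      unfolding sum_hit_prob_Suc[OF False] by (simp add: nn_integral_cmult)
    also have "\<dots> \<le> stopped_variation P pol sg f (Suc N) s"
      using False by (simp add: nn_integral_mono pointwise)
    finally show ?thesis .
  qed
qed

text \<open>This is Pr[t < T < \<infinity>], which is Pr[t < T] only if sg is reached almost surely.\<close>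

definition hit_prob_tail ::
  "('s \<Rightarrow> 'a \<Rightarrow> 's \<Rightarrow> 's pmf) \<Rightarrow> ('s \<Rightarrow> 's \<Rightarrow> 'a pmf) \<Rightarrow> 's \<Rightarrow> nat \<Rightarrow> 's \<Rightarrow> ennreal"
where
  "hit_prob_tail P pol sg t s = (\<Sum>n. hit_prob P pol sg (n + Suc t) s)"

lemma hit_prob_tail_0:
  assumes "reach_prob P pol sg s = 1" and "s \<noteq> sg"
  shows "hit_prob_tail P pol sg 0 s = 1"
proof -
  have "reach_prob P pol sg s
      = (\<Sum>n. hit_prob P pol sg (n + 1) s) + (\<Sum>n<1. hit_prob P pol sg n s)"
    unfolding reach_prob_def by (rule suminf_offset) auto
  then show ?thesis
    using assms by (simp add: hit_prob_tail_def)
qed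

lemma nn_integral_hit_prob_tail:
  assumes "s \<noteq> sg"
  shows "(\<integral>\<^sup>+ s'. hit_prob_tail P pol sg t s' \<partial>measure_pmf (step_kernel P pol sg s))
    = hit_prob_tail P pol sg (Suc t) s"
proof -
  have "(\<integral>\<^sup>+ s'. hit_prob_tail P pol sg t s' \<partial>measure_pmf (step_kernel P pol sg s))
      = (\<Sum>n. \<integral>\<^sup>+ s'. hit_prob P pol sg (n + Suc t) s' \<partial>measure_pmf (step_kernel P pol sg s))"
    unfolding hit_prob_tail_def by (rule nn_integral_suminf) auto
  also have "\<dots> = (\<Sum>n. hit_prob P pol sg (Suc (n + Suc t)) s)"
    using assms by (simp only: hit_prob.simps(2) if_False)
  also have "\<dots> = hit_prob_tail P pol sg (Suc t) s"
    unfolding hit_prob_tail_def by (simp del: hit_prob.simps)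
  finally show ?thesis .
qed

lemma stopped_variation_le_sum_hit_prob_tail:
  assumes reach: "\<And>s. reach_prob P pol sg s = 1"
    and increment: "\<And>s. (\<integral>\<^sup>+ s'. ennreal \<bar>f s' - f s\<bar> \<partial>measure_pmf (step_kernel P pol sg s)) \<le> ennreal L"
  shows "stopped_variation P pol sg f N s \<le> ennreal L * (\<Sum>t<N. hit_prob_tail P pol sg t s)"
proof (induction N arbitrary: s)
  case 0
  then show ?case by simp
next
  case (Suc N)
  show ?case
  proof (cases "s = sg")
    case True
    then show ?thesis by simp
  next
    case False
    let ?K = "measure_pmf (step_kernel P pol sg s)"
    have "stopped_variation P pol sg f (Suc N) s
        = (\<integral>\<^sup>+ s'. ennreal \<bar>f s' - f s\<bar> \<partial>?K) + (\<integral>\<^sup>+ s'. stopped_variation P pol sg f N s' \<partial>?K)"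
      using False by (simp add: nn_integral_add)
    also have "\<dots> \<le> ennreal L + (\<integral>\<^sup>+ s'. ennreal L * (\<Sum>t<N. hit_prob_tail P pol sg t s') \<partial>?K)"
      by (intro add_mono increment nn_integral_mono Suc.IH)
    also have "(\<integral>\<^sup>+ s'. ennreal L * (\<Sum>t<N. hit_prob_tail P pol sg t s') \<partial>?K)
        = ennreal L * (\<Sum>t<N. hit_prob_tail P pol sg (Suc t) s)"
      by (simp add: nn_integral_cmult nn_integral_sum nn_integral_hit_prob_tail[OF False])
    also have "ennreal L + ennreal L * (\<Sum>t<N. hit_prob_tail P pol sg (Suc t) s)
        = ennreal L * (\<Sum>t<Suc N. hit_prob_tail P pol sg t s)"
      by (simp only: sum.lessThan_Suc_shift hit_prob_tail_0[OF reach False] distrib_left mult_1_right)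
    finally show ?thesis .
  qed
qed

lemma sum_lessThan_if_less: "(\<Sum>t<N. if t < m then h else 0) = of_nat (min N m) * (h :: 'a :: semiring_1)"
  by (induction N) (auto simp: min_def distrib_right add.commute)

lemma sum_hit_prob_tail_le_expected_hit_time:
  "(\<Sum>t<N. hit_prob_tail P pol sg t s) \<le> (\<Sum>m. of_nat m * hit_prob P pol sg m s)"
proof -
  have tail: "hit_prob_tail P pol sg t s = (\<Sum>m. if t < m then hit_prob P pol sg m s else 0)" for t
  proof -
    have "(\<Sum>m. if t < m then hit_prob P pol sg m s else 0)
        = (\<Sum>n. if t < n + Suc t then hit_prob P pol sg (n + Suc t) s else 0)
          + (\<Sum>n<Suc t. if t < n then hit_prob P pol sg n s else 0)"
      by (rule suminf_offset) auto
    then show ?thesis by (simp add: hit_prob_tail_def)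
  qed
  have "(\<Sum>t<N. hit_prob_tail P pol sg t s) = (\<Sum>m. \<Sum>t<N. if t < m then hit_prob P pol sg m s else 0)"
    unfolding tail by (rule suminf_sum[symmetric]) auto
  also have "\<dots> \<le> (\<Sum>m. of_nat m * hit_prob P pol sg m s)"
    unfolding sum_lessThan_if_less by (intro suminf_le) (auto intro: mult_right_mono)
  finally show ?thesis .
qed

lemma distance_times_sum_hit_prob_le_expected_hit_time:
  assumes "\<And>s. reach_prob P pol sg s = 1"
    and "\<And>s. (\<integral>\<^sup>+ s'. ennreal \<bar>f s' - f s\<bar> \<partial>measure_pmf (step_kernel P pol sg s)) \<le> ennreal L"
  shows "ennreal \<bar>f sg - f s\<bar> * (\<Sum>n<N. hit_prob P pol sg n s)
    \<le> ennreal L * (\<Sum>m. of_nat m * hit_prob P pol sg m s)"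
proof -
  have "ennreal \<bar>f sg - f s\<bar> * (\<Sum>n<N. hit_prob P pol sg n s) \<le> stopped_variation P pol sg f N s"
    by (rule distance_times_hit_prob_le_stopped_variation)
  also have "\<dots> \<le> ennreal L * (\<Sum>t<N. hit_prob_tail P pol sg t s)"
    using assms by (rule stopped_variation_le_sum_hit_prob_tail)
  also have "\<dots> \<le> ennreal L * (\<Sum>m. of_nat m * hit_prob P pol sg m s)"
    by (intro mult_left_mono sum_hit_prob_tail_le_expected_hit_time) simp
  finally show ?thesis .
qed

theorem proposition4:
  fixes P :: "'s::countable \<Rightarrow> 'a \<Rightarrow> 's \<Rightarrow> 's pmf"
    and pol :: "'s \<Rightarrow> 's \<Rightarrow> 'a pmf"
    and sg :: 's and f :: "'s \<Rightarrow> real" and L :: real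
  assumes reach: "\<And>s. reach_prob P pol sg s = 1"
    and bounded: "(SUP s. \<integral>\<^sup>+ a. (\<integral>\<^sup>+ s'. ennreal \<bar>f s' - f s\<bar> \<partial>measure_pmf (P s a sg))
                       \<partial>measure_pmf (pol s sg)) \<le> ennreal L"
  shows "\<And>s0. ennreal \<bar>f sg - f s0\<bar> \<le> ennreal L * dT P pol s0 sg"
proof -
  fix s0
  have increment: "(\<integral>\<^sup>+ s'. ennreal \<bar>f s' - f s\<bar> \<partial>measure_pmf (step_kernel P pol sg s)) \<le> ennreal L" for s
    using order_trans[OF SUP_upper[OF UNIV_I] bounded, of s] by (simp add: step_kernel_def)
  have "ennreal \<bar>f sg - f s0\<bar> = ennreal \<bar>f sg - f s0\<bar> * (SUP N. \<Sum>n<N. hit_prob P pol sg n s0)"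
    using reach[of s0] by (simp add: reach_prob_def suminf_eq_SUP)
  also have "\<dots> = (SUP N. ennreal \<bar>f sg - f s0\<bar> * (\<Sum>n<N. hit_prob P pol sg n s0))"
    by (rule SUP_mult_left_ennreal)
  also have "\<dots> \<le> ennreal L * (\<Sum>m. of_nat m * hit_prob P pol sg m s0)"
    by (intro SUP_least distance_times_sum_hit_prob_le_expected_hit_time reach increment)
  also have "\<dots> = ennreal L * dT P pol s0 sg"
    using reach[of s0] by (simp add: dT_def)
  finally show "ennreal \<bar>f sg - f s0\<bar> \<le> ennreal L * dT P pol s0 sg" .
qed

end
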